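(* Let $n\ge 3$ and let $\mathcal D_n$ be a minimal DFA with state set $Q_n=\{0,\dots,n-1\}$ and initial state $0$ recognizing a left ideal, and let $T_n$ be its transition semigroup. If $|T_n|=n^{n-1}+n-1$, then $T_n=S_n$.
   Context: A left ideal is a nonempty $L\subseteq\Sigma^*$ with $L=\Sigma^*L$. The transition semigroup of a DFA is the set of transformations $q\mapsto\delta(q,w)$ of its state set induced by nonempty words $w$. Notation: for a transformation $t$, $qt$ is the image of $q$; $(p\to q)$ maps $p$ to $q$ and fixes all other states; $(Q_n\to q)$ is the constant map to $q$; $(p_0,\dots,p_{k-1})$ is the cyclic permutation $p_0\mapsto p_1\mapsto\cdots\mapsto p_{k-1}\mapsto p_0$ fixing all other states. $S_n$ (for $n\ge3$) is the transition semigroup of the DFA $\mathcal W_n$ with states $Q_n$, initial state $0$, final states $\{n-1\}$, alphabet $\{a,b,c,d,e\}$, where $a$ induces $(1,2,\dots,n-1)$, $b$ induces $(1,2)$, $c$ induces $(n-1\to 1)$, $d$ induces $(n-1\to 0)$, and $e$ induces $(Q_n\to 1)$. *)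

theory Defs
  imports Main
begin

text \<open>A DFA has state set Q_n = {0..<n}, initial state 0, a finite alphabet Sigma,
a transition function delta (only its values on Q_n x Sigma matter) and final states F.\<close>

definition is_dfa :: "nat \<Rightarrow> 'a set \<Rightarrow> (nat \<Rightarrow> 'a \<Rightarrow> nat) \<Rightarrow> nat set \<Rightarrow> bool" where
  "is_dfa n \<Sigma> \<delta> F \<longleftrightarrow> finite \<Sigma> \<and> (\<forall>q<n. \<forall>a\<in>\<Sigma>. \<delta> q a < n) \<and> F \<subseteq> {..<n}"

definition dfa_lang :: "'a set \<Rightarrow> (nat \<Rightarrow> 'a \<Rightarrow> nat) \<Rightarrow> nat set \<Rightarrow> 'a list set" where
  "dfa_lang \<Sigma> \<delta> F = {w \<in> lists \<Sigma>. foldl \<delta> 0 w \<in> F}"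

definition minimal_dfa :: "nat \<Rightarrow> 'a set \<Rightarrow> (nat \<Rightarrow> 'a \<Rightarrow> nat) \<Rightarrow> nat set \<Rightarrow> bool" where
  "minimal_dfa n \<Sigma> \<delta> F \<longleftrightarrow> is_dfa n \<Sigma> \<delta> F
     \<and> (\<forall>q<n. \<exists>w\<in>lists \<Sigma>. foldl \<delta> 0 w = q)
     \<and> (\<forall>p<n. \<forall>q<n. p \<noteq> q \<longrightarrow> (\<exists>w\<in>lists \<Sigma>. (foldl \<delta> p w \<in> F) \<noteq> (foldl \<delta> q w \<in> F)))"

definition left_ideal :: "'a set \<Rightarrow> 'a list set \<Rightarrow> bool" where
  "left_ideal \<Sigma> L \<longleftrightarrow> L \<noteq> {} \<and> L = {u @ v | u v. u \<in> lists \<Sigma> \<and> v \<in> L}"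

definition word_trans :: "nat \<Rightarrow> (nat \<Rightarrow> 'a \<Rightarrow> nat) \<Rightarrow> 'a list \<Rightarrow> nat \<Rightarrow> nat" where
  "word_trans n \<delta> w = (\<lambda>q. if q < n then foldl \<delta> q w else q)"

definition trans_semigroup :: "nat \<Rightarrow> 'a set \<Rightarrow> (nat \<Rightarrow> 'a \<Rightarrow> nat) \<Rightarrow> (nat \<Rightarrow> nat) set" where
  "trans_semigroup n \<Sigma> \<delta> = {word_trans n \<delta> w | w. w \<in> lists \<Sigma> \<and> w \<noteq> []}"

datatype wletter = La | Lb | Lc | Ld | Le

text \<open>Transitions of W_n: a = (1,2,...,n-1), b = (1,2), c = (n-1 -> 1), d = (n-1 -> 0), e = (Q_n -> 1).\<close>
fun W_delta :: "nat \<Rightarrow> nat \<Rightarrow> wletter \<Rightarrow> nat" where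
  "W_delta n q La = (if q = 0 then 0 else if q = n - 1 then 1 else q + 1)"
| "W_delta n q Lb = (if q = 1 then 2 else if q = 2 then 1 else q)"
| "W_delta n q Lc = (if q = n - 1 then 1 else q)"
| "W_delta n q Ld = (if q = n - 1 then 0 else q)"
| "W_delta n q Le = 1"

definition S :: "nat \<Rightarrow> (nat \<Rightarrow> nat) set" where
  "S n = trans_semigroup n UNIV (W_delta n)"

end

(*
  Order the states by inclusion of their quotients {w. q.w in F}. Minimality makes this a partial
  order, the left-ideal property makes the initial state 0 its least element, and every
  transformation of the DFA is monotone for it. The semigroup S_n consists exactly of the
  n^(n-1) transformations fixing 0 and the n-1 constant maps onto nonzero states.
  If two nonzero states are comparable, an explicit injection of the nonconstant monotone maps
  moving 0 into the non-monotone maps fixing 0, which misses at least one of them, shows that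
  fewer than n^(n-1)+n-1 transformations are monotone. So the nonzero states form an antichain;
  then every monotone map fixes 0 or is constant, T_n is contained in S_n, and the cardinality
  hypothesis forces equality.
*)
theory Submission
  imports Defs "HOL-Combinatorics.Permutations"
begin

section \<open>Transformations of \<open>Q\<^sub>n\<close>\<close>

definition is_transf :: "nat \<Rightarrow> (nat \<Rightarrow> nat) \<Rightarrow> bool" where
  "is_transf n f \<longleftrightarrow> (\<forall>q<n. f q < n) \<and> (\<forall>q. n \<le> q \<longrightarrow> f q = q)"

definition fix0_transfs :: "nat \<Rightarrow> (nat \<Rightarrow> nat) set" where
  "fix0_transfs n = {f. is_transf n f \<and> f 0 = 0}"

definition const_transf :: "nat \<Rightarrow> nat \<Rightarrow> nat \<Rightarrow> nat" where
  "const_transf n c = (\<lambda>q. if q < n then c else q)"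

definition fix0_or_const :: "nat \<Rightarrow> (nat \<Rightarrow> nat) set" where
  "fix0_or_const n = fix0_transfs n \<union> const_transf n ` {1..<n}"

definition redirect :: "nat \<Rightarrow> nat \<Rightarrow> nat \<Rightarrow> nat" where
  "redirect i j = (\<lambda>q. if q = i then j else q)"

lemma is_transf_upd: "is_transf n f \<Longrightarrow> i < n \<Longrightarrow> j < n \<Longrightarrow> is_transf n (f(i := j))"
  by (auto simp: is_transf_def)

lemma const_transf_eqI:
  assumes "is_transf n f" "c < n" "\<And>q. q < n \<Longrightarrow> f q = c"
  shows "f = const_transf n c"
proof
  fix q show "f q = const_transf n c q"
    using assms by (cases "q < n") (auto simp: is_transf_def const_transf_def)
qed

lemma foldl_lessThan:
  assumes "\<forall>q<n. \<forall>x\<in>A. d q x < n" "w \<in> lists A" "q < n"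
  shows "foldl d q w < n"
  using assms(2,3) by (induction w arbitrary: q) (use assms(1) in auto)

lemma word_trans_append:
  assumes "\<forall>q<n. \<forall>x\<in>A. d q x < n" "u \<in> lists A"
  shows "word_trans n d (u @ v) = word_trans n d v \<circ> word_trans n d u"
  using foldl_lessThan[OF assms] by (auto simp: word_trans_def)

lemma is_transf_word_trans:
  assumes "\<forall>q<n. \<forall>x\<in>A. d q x < n" "w \<in> lists A"
  shows "is_transf n (word_trans n d w)"
  using foldl_lessThan[OF assms] by (auto simp: word_trans_def is_transf_def)

lemma finite_transfs: "finite {f. is_transf n f}"
proof -
  let ?ext = "\<lambda>g q. if q < n then g q else q"
  have "{f. is_transf n f} \<subseteq> ?ext ` (\<Pi>\<^sub>E q\<in>{..<n}. {..<n})"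
  proof
    fix f assume "f \<in> {f. is_transf n f}"
    then show "f \<in> ?ext ` (\<Pi>\<^sub>E q\<in>{..<n}. {..<n})"
      by (intro image_eqI[of _ _ "restrict f {..<n}"]) (auto simp: is_transf_def fun_eq_iff)
  qed
  then show ?thesis by (rule finite_subset) (intro finite_imageI finite_PiE; simp)
qed

lemma card_fix0_transfs_le: "card (fix0_transfs n) \<le> n ^ (n - 1)"
proof -
  let ?ext = "\<lambda>g q. if q \<in> {1..<n} then g q else if q < n then 0 else q"
  have "fix0_transfs n \<subseteq> ?ext ` (\<Pi>\<^sub>E q\<in>{1..<n}. {..<n})"
  proof
    fix f assume "f \<in> fix0_transfs n"
    then show "f \<in> ?ext ` (\<Pi>\<^sub>E q\<in>{1..<n}. {..<n})"
      by (intro image_eqI[of _ _ "restrict f {1..<n}"])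
        (auto simp: fix0_transfs_def is_transf_def fun_eq_iff not_less_eq_eq)
  qed
  then have "card (fix0_transfs n) \<le> card (?ext ` (\<Pi>\<^sub>E q\<in>{1..<n}. {..<n}))"
    by (rule card_mono[rotated]) (intro finite_imageI finite_PiE; simp)
  also have "\<dots> \<le> card (\<Pi>\<^sub>E q\<in>{1..<n}. {..<n})" by (rule card_image_le) (intro finite_PiE; simp)
  finally show ?thesis by (simp add: card_PiE)
qed

lemma finite_fix0_or_const: "finite (fix0_or_const n)"
  using finite_transfs[of n] by (auto simp: fix0_or_const_def fix0_transfs_def intro: finite_subset)

lemma card_fix0_or_const_le: "card (fix0_or_const n) \<le> n ^ (n - 1) + (n - 1)"
proof -
  have "card (fix0_or_const n) \<le> card (fix0_transfs n) + card (const_transf n ` {1..<n})"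
    unfolding fix0_or_const_def by (rule card_Un_le)
  then show ?thesis
    using card_fix0_transfs_le[of n] card_image_le[of "{1..<n}" "const_transf n"] by simp
qed

lemma fix0_transf_redirect_decomp:
  assumes f: "f \<in> fix0_transfs n" and nsurj: "f ` {..<n} \<noteq> {..<n}"
  obtains g z j where "g \<in> fix0_transfs n" "z \<in> {1..<n}" "j < n" "z \<noteq> j"
    "card ({..<n} - g ` {..<n}) < card ({..<n} - f ` {..<n})" "f = redirect z j \<circ> g"
proof -
  have f_lt: "\<And>q. q < n \<Longrightarrow> f q < n" and f_out: "\<And>q. n \<le> q \<Longrightarrow> f q = q" and f0: "f 0 = 0"
    using f by (auto simp: fix0_transfs_def is_transf_def)
  have img_sub: "f ` {..<n} \<subseteq> {..<n}" using f_lt by auto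
  obtain z where z: "z < n" "z \<notin> f ` {..<n}" using img_sub nsurj by auto
  have "\<not> inj_on f {..<n}"
    using img_sub nsurj by (metis card_image card_lessThan card_subset_eq finite_lessThan)
  then obtain r s where rs: "r < n" "s < n" "r \<noteq> s" "f r = f s" "s \<noteq> 0"
    by (auto simp: inj_on_def) (metis neq0_conv)
  have z0: "z \<noteq> 0" using z f0 by force
  define g where "g = f(s := z)"
  have "f ` ({..<n} - {s}) = f ` {..<n}"
  proof
    show "f ` {..<n} \<subseteq> f ` ({..<n} - {s})"
    proof
      fix y assume "y \<in> f ` {..<n}"
      then obtain q where "q < n" "y = f q" by auto
      then show "y \<in> f ` ({..<n} - {s})" using rs by (cases "q = s") (auto intro: image_eqI[of "f s" f r])
    qed
  qed auto
  then have g_img: "g ` {..<n} = insert z (f ` {..<n})"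
    using rs(2) by (auto simp: g_def image_insert[symmetric] insert_Diff)
  show ?thesis
  proof
    show "g \<in> fix0_transfs n" using f rs z by (auto simp: g_def fix0_transfs_def is_transf_def)
    show "z \<in> {1..<n}" using z z0 by simp
    show "f s < n" "z \<noteq> f s" using z rs f_lt by auto
    show "card ({..<n} - g ` {..<n}) < card ({..<n} - f ` {..<n})"
      unfolding g_img using z by (intro psubset_card_mono) auto
    show "f = redirect z (f s) \<circ> g"
      using z f_out by (auto simp: fun_eq_iff g_def redirect_def) (metis not_le imageI lessThan_iff)
  qed
qed

lemma fix0_surj_permutes:
  assumes f: "f \<in> fix0_transfs n" and surj: "f ` {..<n} = {..<n}"
  shows "f permutes {1..<n}"
proof (rule bij_imp_permutes)
  have inj: "inj_on f {..<n}" using surj by (simp add: eq_card_imp_inj_on)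
  have "{1..<n} = {..<n} - {0}" by auto
  moreover have "f ` ({..<n} - {0}) = {..<n} - {0}"
    using inj_on_image_set_diff[OF inj, of "{..<n}" "{0}"] surj f
    by (auto simp: fix0_transfs_def)
  ultimately show "bij_betw f {1..<n} {1..<n}"
    using inj by (auto simp: bij_betw_def intro: inj_on_subset)
  show "f q = q" if "q \<notin> {1..<n}" for q
    using f that by (cases "q = 0") (auto simp: fix0_transfs_def is_transf_def)
qed

lemma transf_comp_const_transf:
  "is_transf n g \<Longrightarrow> c < n \<Longrightarrow> g \<circ> const_transf n c = const_transf n (g c)"
  by (auto simp: fun_eq_iff const_transf_def is_transf_def)

lemma const_transf_in_fix0_or_const: "d < n \<Longrightarrow> const_transf n d \<in> fix0_or_const n"
  by (cases "d = 0") (auto simp: fix0_or_const_def fix0_transfs_def is_transf_def const_transf_def)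

section \<open>The semigroup \<open>S\<^sub>n\<close>\<close>

context
  fixes n :: nat
  assumes n3: "3 \<le> n"
begin

abbreviation wt :: "wletter list \<Rightarrow> nat \<Rightarrow> nat" where
  "wt \<equiv> word_trans n (W_delta n)"

lemma W_delta_lt: "q < n \<Longrightarrow> W_delta n q x < n"
  using n3 by (cases x) auto

lemma wt_append: "wt (u @ v) = wt v \<circ> wt u"
  by (rule word_trans_append[where A = UNIV]) (auto simp: W_delta_lt)

lemma is_transf_wt: "is_transf n (wt w)"
  by (rule is_transf_word_trans[where A = UNIV]) (auto simp: W_delta_lt)

lemma wt_Nil: "wt [] = id"
  by (auto simp: word_trans_def)

lemma wt_Lb: "wt [Lb] = Transposition.transpose 1 2"
  using n3 by (auto simp: fun_eq_iff word_trans_def transpose_def)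

lemma wt_Lc: "wt [Lc] = redirect (n - 1) 1"
  using n3 by (auto simp: fun_eq_iff word_trans_def redirect_def)

lemma wt_Ld: "wt [Ld] = redirect (n - 1) 0"
  using n3 by (auto simp: fun_eq_iff word_trans_def redirect_def)

lemma wt_Le: "wt [Le] = const_transf n 1"
  by (auto simp: fun_eq_iff word_trans_def const_transf_def)

definition W_monoid :: "(nat \<Rightarrow> nat) set" where
  "W_monoid = range wt"

lemma wt_in_W_monoid: "wt w \<in> W_monoid"
  by (simp add: W_monoid_def)

lemma id_in_W_monoid: "id \<in> W_monoid"
  by (metis wt_Nil wt_in_W_monoid)

lemma comp_in_W_monoid:
  assumes "f \<in> W_monoid" "g \<in> W_monoid"
  shows "g \<circ> f \<in> W_monoid"
proof -
  obtain u v where "f = wt u" "g = wt v" using assms by (auto simp: W_monoid_def)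
  then have "g \<circ> f = wt (u @ v)" by (simp add: wt_append)
  then show ?thesis by (simp add: W_monoid_def)
qed

definition a_pow :: "nat \<Rightarrow> nat \<Rightarrow> nat" where
  "a_pow k q = (if 1 \<le> q \<and> q < n then (q - 1 + k) mod (n - 1) + 1 else q)"

lemma foldl_La_replicate: "q < n \<Longrightarrow> foldl (W_delta n) q (replicate k La) = a_pow k q"
proof (induction k arbitrary: q)
  case 0
  then show ?case by (auto simp: a_pow_def)
next
  case (Suc k)
  have "foldl (W_delta n) q (replicate (Suc k) La) = a_pow k (W_delta n q La)"
    using Suc W_delta_lt by simp
  also have "\<dots> = a_pow (Suc k) q"
  proof -
    consider "q = 0" | "q = n - 1" | "0 < q" "q < n - 1" using Suc.prems by linarith
    then show ?thesis
    proof cases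
      case 2
      have e: "n - 1 - 1 + Suc k = k + (n - 1)" using n3 by arith
      have "(0 + k) mod (n - 1) = (n - 1 - 1 + Suc k) mod (n - 1)" unfolding e by simp
      then show ?thesis using 2 n3 by (simp add: a_pow_def)
    qed (use n3 in \<open>auto simp: a_pow_def\<close>)
  qed
  finally show ?case .
qed

lemma wt_La_replicate: "wt (replicate k La) = a_pow k"
  using foldl_La_replicate by (auto simp: fun_eq_iff word_trans_def a_pow_def)

lemma a_pow_in_W_monoid: "a_pow k \<in> W_monoid"
  by (metis wt_La_replicate wt_in_W_monoid)

lemma is_transf_a_pow: "is_transf n (a_pow k)"
  by (metis wt_La_replicate is_transf_wt)

lemma a_pow_a_pow: assumes "k + m = n - 1" shows "a_pow k (a_pow m q) = q"
proof (cases "1 \<le> q \<and> q < n")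
  case True
  let ?r = "(q - 1 + m) mod (n - 1) + 1"
  have "(q - 1 + m) mod (n - 1) < n - 1" using n3 by simp
  then have "1 \<le> ?r" "?r < n" by arith+
  then have "a_pow k (a_pow m q) = ((q - 1 + m) mod (n - 1) + k) mod (n - 1) + 1"
    using True by (simp add: a_pow_def)
  also have "((q - 1 + m) mod (n - 1) + k) mod (n - 1) = (q - 1 + (n - 1)) mod (n - 1)"
    using assms by (simp add: mod_add_left_eq add.assoc add.commute[of m k])
  also have "\<dots> = (q - 1) mod (n - 1)" by (rule mod_add_self2)
  also have "\<dots> = q - 1" using True by (intro mod_less) arith
  finally show ?thesis using True by simp
qed (auto simp: a_pow_def)

lemma inj_a_pow: "k \<le> n - 1 \<Longrightarrow> inj (a_pow k)"
  by (metis a_pow_a_pow le_add_diff_inverse2 injI)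

lemma transpose_adjacent_in_W_monoid:
  assumes "1 \<le> i" "i + 1 < n"
  shows "Transposition.transpose i (i + 1) \<in> W_monoid"
proof -
  let ?k = "i - 1" and ?m = "n - 1 - (i - 1)"
  have "a_pow ?k \<circ> Transposition.transpose 1 2 \<circ> a_pow ?m = Transposition.transpose i (i + 1)"
  proof
    fix q
    have conj: "g (Transposition.transpose a b x) = Transposition.transpose (g a) (g b) (g x)"
      if "inj g" for g :: "nat \<Rightarrow> nat" and a b x
      using that by (auto simp: transpose_def inj_eq)
    have "q = a_pow ?k (a_pow ?m q)" using a_pow_a_pow[of ?k ?m q] assms by simp
    moreover have "a_pow ?k 1 = i" "a_pow ?k 2 = i + 1" using assms n3 by (auto simp: a_pow_def)
    ultimately show "(a_pow ?k \<circ> Transposition.transpose 1 2 \<circ> a_pow ?m) q = Transposition.transpose i (i + 1) q"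
      using conj[OF inj_a_pow[of ?k]] assms by simp
  qed
  moreover have "a_pow ?k \<circ> Transposition.transpose 1 2 \<circ> a_pow ?m \<in> W_monoid"
    by (intro comp_in_W_monoid a_pow_in_W_monoid) (metis wt_Lb wt_in_W_monoid)
  ultimately show ?thesis by simp
qed

lemma transpose_in_W_monoid:
  assumes "a \<in> {1..<n}" "b \<in> {1..<n}"
  shows "Transposition.transpose a b \<in> W_monoid"
proof -
  have less: "Transposition.transpose i j \<in> W_monoid" if "1 \<le> i" "i < j" "j < n" for i j
    using that
  proof (induction j rule: less_induct)
    case (less j)
    show ?case
    proof (cases "j = i + 1")
      case True then show ?thesis using transpose_adjacent_in_W_monoid less.prems by simp
    next
      case False
      define l where "l = j - 1"
      have l: "j = l + 1" "i < l" using less.prems False unfolding l_def by arith+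
      then have "Transposition.transpose i j =
          Transposition.transpose l (l + 1) \<circ> Transposition.transpose i l \<circ> Transposition.transpose l (l + 1)"
        by (auto simp: fun_eq_iff transpose_def)
      also have "\<dots> \<in> W_monoid"
        using less.prems l by (intro comp_in_W_monoid transpose_adjacent_in_W_monoid less.IH) auto
      finally show ?thesis .
    qed
  qed
  consider "a < b" | "a = b" | "b < a" by arith
  then show ?thesis
  proof cases
    case 1 then show ?thesis using less assms by simp
  next
    case 2 then show ?thesis using id_in_W_monoid by (simp add: transpose_same id_def)
  next
    case 3 then show ?thesis using less[of b a] assms by (simp add: transpose_commute)
  qed
qed

lemma permutes_in_W_monoid:
  assumes "p permutes {1..<n}"
  shows "p \<in> W_monoid"
  using assms finite_atLeastLessThan
proof (induction rule: permutes_induct)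
  case id then show ?case by (rule id_in_W_monoid)
next
  case (swap a b p) then show ?case using comp_in_W_monoid transpose_in_W_monoid by blast
qed

lemma redirect_in_W_monoid:
  assumes "i \<in> {1..<n}" "j < n" "i \<noteq> j"
  shows "redirect i j \<in> W_monoid"
proof -
  have conj: "Transposition.transpose x y \<circ> redirect i' j' \<circ> Transposition.transpose x y
      = redirect (Transposition.transpose x y i') (Transposition.transpose x y j')" for x y i' j'
    by (auto simp: fun_eq_iff transpose_def redirect_def)
  have top: "redirect (n - 1) j \<in> W_monoid" if "j < n" "j \<noteq> n - 1" for j
  proof (cases "j = 0")
    case True then show ?thesis by (metis wt_Ld wt_in_W_monoid)
  next
    case False
    have eq: "Transposition.transpose 1 j \<circ> redirect (n - 1) 1 \<circ> Transposition.transpose 1 j = redirect (n - 1) j"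
      unfolding conj using that n3 by (auto simp: transpose_def)
    have "Transposition.transpose 1 j \<in> W_monoid"
      using False that by (intro transpose_in_W_monoid) auto
    moreover have "redirect (n - 1) 1 \<in> W_monoid" by (metis wt_Lc wt_in_W_monoid)
    ultimately show ?thesis unfolding eq[symmetric] by (intro comp_in_W_monoid)
  qed
  show ?thesis
  proof (cases "i = n - 1")
    case True then show ?thesis using top assms by simp
  next
    case False
    let ?t = "Transposition.transpose i (n - 1)"
    have eq: "?t \<circ> redirect (n - 1) (?t j) \<circ> ?t = redirect i j"
      unfolding conj using assms False by (simp add: transpose_def)
    have "?t \<in> W_monoid" using assms n3 by (intro transpose_in_W_monoid) auto
    moreover have "redirect (n - 1) (?t j) \<in> W_monoid"
      using assms False by (intro top) (auto simp: transpose_def)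
    ultimately show ?thesis unfolding eq[symmetric] by (intro comp_in_W_monoid)
  qed
qed

lemma fix0_transfs_subset_W_monoid: "fix0_transfs n \<subseteq> W_monoid"
proof
  fix f assume "f \<in> fix0_transfs n"
  then show "f \<in> W_monoid"
  proof (induction "card ({..<n} - f ` {..<n})" arbitrary: f rule: less_induct)
    case less
    show ?case
    proof (cases "f ` {..<n} = {..<n}")
      case True then show ?thesis using fix0_surj_permutes less.prems permutes_in_W_monoid by blast
    next
      case False
      then obtain g z j where g: "g \<in> fix0_transfs n" "card ({..<n} - g ` {..<n}) < card ({..<n} - f ` {..<n})"
        and z: "z \<in> {1..<n}" "j < n" "z \<noteq> j" and f_eq: "f = redirect z j \<circ> g"
        using fix0_transf_redirect_decomp less.prems by metis
      have "g \<in> W_monoid" using less.hyps g by blast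
      then show ?thesis unfolding f_eq using comp_in_W_monoid redirect_in_W_monoid z by blast
    qed
  qed
qed

lemma wt_in_fix0_or_const: "wt w \<in> fix0_or_const n"
proof (induction w rule: rev_induct)
  case Nil
  show ?case by (simp add: wt_Nil fix0_or_const_def fix0_transfs_def is_transf_def)
next
  case (snoc x w)
  have comp: "wt (w @ [x]) = wt [x] \<circ> wt w" by (rule wt_append)
  from snoc.IH consider "wt w \<in> fix0_transfs n" | c where "c < n" "wt w = const_transf n c"
    by (auto simp: fix0_or_const_def)
  then show ?case
  proof cases
    case 1
    show ?thesis
    proof (cases "x = Le")
      case True
      then have "wt (w @ [x]) = const_transf n 1"
        using comp 1 by (auto simp: fun_eq_iff wt_Le const_transf_def fix0_transfs_def is_transf_def)
      then show ?thesis using n3 const_transf_in_fix0_or_const by simp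
    next
      case False
      then have "W_delta n 0 x = 0" using n3 by (cases x) auto
      then have "wt (w @ [x]) 0 = 0" using comp 1 n3 by (simp add: fix0_transfs_def word_trans_def)
      then show ?thesis using is_transf_wt by (simp add: fix0_or_const_def fix0_transfs_def)
    qed
  next
    case 2
    then show ?thesis
      using comp transf_comp_const_transf[OF is_transf_wt] const_transf_in_fix0_or_const is_transf_wt
      by (simp add: is_transf_def)
  qed
qed

theorem S_eq_fix0_or_const: "S n = fix0_or_const n"
proof
  show "S n \<subseteq> fix0_or_const n"
    using wt_in_fix0_or_const by (auto simp: S_def trans_semigroup_def)
next
  have nonempty_word: "f \<in> S n" if "f = wt w" "w \<noteq> []" for f w
    using that by (auto simp: S_def trans_semigroup_def)
  show "fix0_or_const n \<subseteq> S n"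
  proof
    fix f assume "f \<in> fix0_or_const n"
    then consider "f \<in> fix0_transfs n" | c where "c \<in> {1..<n}" "f = const_transf n c"
      by (auto simp: fix0_or_const_def)
    then show "f \<in> S n"
    proof cases
      case 1
      then obtain w where "f = wt w" using fix0_transfs_subset_W_monoid by (auto simp: W_monoid_def)
      moreover have "wt [Lb, Lb] = id" using n3 by (auto simp: fun_eq_iff word_trans_def)
      ultimately have "f = wt (w @ [Lb, Lb])" by (simp add: wt_append)
      then show ?thesis by (rule nonempty_word) simp
    next
      case 2
      have "c - 1 < n - 1" using 2 by auto
      then have c_eq: "a_pow (c - 1) 1 = c" using 2 by (simp add: a_pow_def)
      have "wt ([Le] @ replicate (c - 1) La) = a_pow (c - 1) \<circ> const_transf n 1"
        by (simp only: wt_append wt_Le wt_La_replicate)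
      also have "\<dots> = const_transf n c"
        using n3 c_eq transf_comp_const_transf[OF is_transf_a_pow, of 1 "c - 1"] by simp
      finally have "f = wt ([Le] @ replicate (c - 1) La)" using 2 by simp
      then show ?thesis by (rule nonempty_word) simp
    qed
  qed
qed

end

section \<open>Monotone transformations of a partial order with least element 0\<close>

definition monotone_transfs :: "nat \<Rightarrow> (nat \<Rightarrow> nat \<Rightarrow> bool) \<Rightarrow> (nat \<Rightarrow> nat) set" where
  "monotone_transfs n le = {f. is_transf n f \<and> (\<forall>p<n. \<forall>q<n. le p q \<longrightarrow> le (f p) (f q))}"

locale bottomed_order =
  fixes n :: nat and le :: "nat \<Rightarrow> nat \<Rightarrow> bool" (infix \<open>\<preceq>\<close> 50)
  assumes le_refl_on: "q < n \<Longrightarrow> q \<preceq> q"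
    and le_antisym_on: "p < n \<Longrightarrow> q < n \<Longrightarrow> p \<preceq> q \<Longrightarrow> q \<preceq> p \<Longrightarrow> p = q"
    and le_trans_on: "p < n \<Longrightarrow> q < n \<Longrightarrow> r < n \<Longrightarrow> p \<preceq> q \<Longrightarrow> q \<preceq> r \<Longrightarrow> p \<preceq> r"
    and zero_least: "q < n \<Longrightarrow> 0 \<preceq> q"
begin

definition lt :: "nat \<Rightarrow> nat \<Rightarrow> bool" (infix \<open>\<prec>\<close> 50) where
  "p \<prec> q \<longleftrightarrow> p \<preceq> q \<and> p \<noteq> q"

abbreviation nonzero :: "nat \<Rightarrow> bool" where
  "nonzero q \<equiv> 0 < q \<and> q < n"

abbreviation maximal :: "nat \<Rightarrow> bool" where
  "maximal c \<equiv> \<forall>d. nonzero d \<longrightarrow> \<not> c \<prec> d"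

abbreviation mono_transfs :: "(nat \<Rightarrow> nat) set" where
  "mono_transfs \<equiv> monotone_transfs n (\<preceq>)"

definition moving_mono_transfs :: "(nat \<Rightarrow> nat) set" where
  "moving_mono_transfs = {f \<in> mono_transfs. f 0 \<noteq> 0 \<and> (\<exists>r<n. f r \<noteq> f 0)}"

definition nonmono_fix0_transfs :: "(nat \<Rightarrow> nat) set" where
  "nonmono_fix0_transfs = fix0_transfs n - mono_transfs"

lemma not_le_zero: "nonzero p \<Longrightarrow> \<not> p \<preceq> 0"
  using le_antisym_on zero_least by fastforce

lemma not_lt_both: "p < n \<Longrightarrow> q < n \<Longrightarrow> p \<prec> q \<Longrightarrow> q \<prec> p \<Longrightarrow> False"
  using le_antisym_on by (auto simp: lt_def)

lemma nonmono_fix0_transfsI: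
  assumes "is_transf n h" "h 0 = 0" "a < n" "b < n" "a \<preceq> b" "\<not> h a \<preceq> h b"
  shows "h \<in> nonmono_fix0_transfs"
  using assms by (auto simp: nonmono_fix0_transfs_def fix0_transfs_def monotone_transfs_def)

lemma
  assumes f: "f \<in> moving_mono_transfs"
  shows moving_transf: "is_transf n f"
    and moving_mono: "\<And>p q. p < n \<Longrightarrow> q < n \<Longrightarrow> p \<preceq> q \<Longrightarrow> f p \<preceq> f q"
    and moving_nonconst: "\<exists>r<n. f r \<noteq> f 0"
    and moving_f0: "nonzero (f 0)"
    and moving_f0_le: "\<And>r. r < n \<Longrightarrow> f 0 \<preceq> f r"
    and moving_nonzero: "\<And>r. r < n \<Longrightarrow> nonzero (f r)"
proof -
  show transf: "is_transf n f" and mono: "\<And>p q. p < n \<Longrightarrow> q < n \<Longrightarrow> p \<preceq> q \<Longrightarrow> f p \<preceq> f q"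
    and "\<exists>r<n. f r \<noteq> f 0"
    using f by (auto simp: moving_mono_transfs_def monotone_transfs_def)
  have f0: "f 0 \<noteq> 0" using f by (simp add: moving_mono_transfs_def)
  then have n0: "0 < n" using transf by (auto simp: is_transf_def)
  then show "nonzero (f 0)" using f0 transf by (simp add: is_transf_def)
  show le: "f 0 \<preceq> f r" if "r < n" for r using mono[OF n0 that zero_least[OF that]] .
  show "nonzero (f r)" if "r < n" for r
  proof -
    have "f r \<noteq> 0"
    proof
      assume "f r = 0"
      then show False using le[OF that] not_le_zero[OF \<open>nonzero (f 0)\<close>] by simp
    qed
    then show ?thesis using transf that by (simp add: is_transf_def)
  qed
qed

lemma exists_maximal_above:
  assumes v: "nonzero v"
  shows "\<exists>c. nonzero c \<and> v \<preceq> c \<and> maximal c"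
proof -
  define S where "S = {c. c < n \<and> v \<preceq> c}"
  define g where "g c = card {e. e < n \<and> e \<preceq> c}" for c
  have "v \<in> S" using v le_refl_on by (simp add: S_def)
  moreover have fin: "finite S" by (simp add: S_def)
  ultimately have "Max (g ` S) \<in> g ` S" by (intro Max_in) auto
  then obtain c where c: "c \<in> S" "g c = Max (g ` S)" by auto
  have c_max: "g d \<le> g c" if "d \<in> S" for d using fin that c(2) by simp
  have cn: "c < n" "v \<preceq> c" using c by (auto simp: S_def)
  have "\<not> c \<prec> d" if d: "nonzero d" for d
  proof
    assume cd: "c \<prec> d"
    then have "d \<in> S" using le_trans_on[OF _ cn(1)] v d cn by (auto simp: S_def lt_def)
    have "{e. e < n \<and> e \<preceq> c} \<subset> {e. e < n \<and> e \<preceq> d}"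
    proof
      show "{e. e < n \<and> e \<preceq> c} \<subseteq> {e. e < n \<and> e \<preceq> d}"
        using le_trans_on[OF _ cn(1)] cd d by (auto simp: lt_def)
      show "{e. e < n \<and> e \<preceq> c} \<noteq> {e. e < n \<and> e \<preceq> d}"
        using le_antisym_on[OF cn(1)] cd d le_refl_on by (auto simp: lt_def)
    qed
    then have "g c < g d" unfolding g_def by (intro psubset_card_mono) simp
    then show False using c_max[OF \<open>d \<in> S\<close>] by simp
  qed
  moreover have "c \<noteq> 0" using cn(2) not_le_zero[OF v] by (cases "c = 0") auto
  ultimately show ?thesis using cn by blast
qed

section \<open>Too many monotone transformations when two nonzero states are comparable\<close>

text \<open>With \<open>p = f 0\<close>, the encoding resets 0 and hides \<open>p\<close> in a violation of monotonicity:
  either the values at \<open>p\<close> and at a suitable \<open>w \<succ> p\<close> are exchanged, which creates a unique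
  pair \<open>z \<prec> w\<close> with \<open>h w = z\<close> and \<open>\<not> h z \<preceq> z\<close>, or one or two nonzero states are sent
  to 0. The decoder recognises the branch from the nonzero states that \<open>h\<close> sends to 0.\<close>
definition encode :: "(nat \<Rightarrow> nat) \<Rightarrow> nat \<Rightarrow> nat" where
  "encode f = (let p = f 0 in
    if f p \<noteq> p then f(0 := 0, p := f (f p), f p := p)
    else if \<exists>w. nonzero w \<and> p \<prec> w \<and> f w = p
      then f(0 := 0, (SOME w. nonzero w \<and> p \<prec> w \<and> f w = p) := 0)
    else if \<exists>w. nonzero w \<and> p \<prec> w \<and> \<not> w \<preceq> f w
      then (let w = SOME w. nonzero w \<and> p \<prec> w \<and> \<not> w \<preceq> f w in f(0 := 0, p := f w, w := p))
    else (let c = SOME c. nonzero c \<and> p \<prec> c \<and> maximal c in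
      if \<exists>z. nonzero z \<and> z \<prec> c \<and> z \<noteq> p then f(0 := 0, c := 0, p := 0)
      else f(0 := 0, c := 0, p := c)))"

definition decode :: "(nat \<Rightarrow> nat) \<Rightarrow> nat \<Rightarrow> nat" where
  "decode h = (if \<exists>q. nonzero q \<and> h q = 0 then
     (if \<exists>a b. nonzero a \<and> nonzero b \<and> h a = 0 \<and> h b = 0 \<and> a \<prec> b then
        (let (a, b) = SOME (a, b). nonzero a \<and> nonzero b \<and> h a = 0 \<and> h b = 0 \<and> a \<prec> b
         in h(0 := a, b := b, a := a))
      else (let w = SOME w. nonzero w \<and> h w = 0 in
        if \<exists>p. nonzero p \<and> p \<prec> w \<and> h p = p
        then (let p = SOME p. nonzero p \<and> p \<prec> w \<and> h p = p in h(0 := p, w := p))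
        else (let p = SOME p. nonzero p \<and> p \<prec> w in h(0 := p, w := w, p := p))))
   else (let (z, w) = SOME (z, w). nonzero z \<and> nonzero w \<and> z \<prec> w \<and> h w = z \<and> \<not> h z \<preceq> z in
     h(0 := z, z := if w \<preceq> h z then w else z, w := h z)))"

text \<open>No encoding is a spike, which makes the injection below miss a non-monotone map.\<close>
definition spike :: "nat \<Rightarrow> nat \<Rightarrow> nat \<Rightarrow> nat" where
  "spike x y = (\<lambda>q. if q = 0 \<or> q = y then 0 else if q < n then x else q)"

lemma spike_zero: "spike x y y = 0"
  by (simp add: spike_def)

lemma spike_eq_0_iff: "nonzero q \<Longrightarrow> 0 < x \<Longrightarrow> spike x y q = 0 \<longleftrightarrow> q = y"
  by (auto simp: spike_def)

lemma spike_apply: "nonzero q \<Longrightarrow> q \<noteq> y \<Longrightarrow> spike x y q = x"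
  by (simp add: spike_def)

lemma spike_in_nonmono_fix0_transfs:
  assumes "nonzero x" "nonzero y" "x \<prec> y"
  shows "spike x y \<in> nonmono_fix0_transfs"
  using assms not_le_zero
  by (intro nonmono_fix0_transfsI[where a = x and b = y]) (auto simp: spike_def is_transf_def lt_def)

lemma swap_marked_pair_unique:
  assumes f: "f \<in> moving_mono_transfs" and p: "p = f 0" and w: "nonzero w" "p \<prec> w"
    and a: "\<not> f w \<preceq> p" and no_drop: "\<not> (\<exists>w'. nonzero w' \<and> p \<prec> w' \<and> f w' = p)"
    and h: "h = f(0 := 0, p := f w, w := p)"
    and z: "nonzero z" and w': "nonzero w'" and marked: "z \<prec> w'" "h w' = z" "\<not> h z \<preceq> z"
  shows "z = p \<and> w' = w"
proof -
  have pw: "p \<noteq> w" using w(2) by (simp add: lt_def)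
  consider "w' = w" | "w' = p" | "w' \<noteq> w" "w' \<noteq> p" "z = p" | "w' \<noteq> w" "w' \<noteq> p" "z = w"
    | "w' \<noteq> w" "w' \<noteq> p" "z \<noteq> p" "z \<noteq> w" by blast
  then show ?thesis
  proof cases
    case 1 then show ?thesis using marked w h by auto
  next
    case 2
    then have "z = f w" using marked(2) h pw w by auto
    then show ?thesis using marked(1) a 2 by (simp add: lt_def)
  next
    case 3
    then have "f w' = p" using marked(2) h w' by auto
    then show ?thesis using no_drop w' marked(1) 3 by auto
  next
    case 4
    then have "h z = p" using h w by auto
    then show ?thesis using marked(3) w(2) 4 by (simp add: lt_def)
  next
    case 5
    then have "h z = f z" "h w' = f w'" using z w' h by auto
    moreover have "f z \<preceq> f w'"
      using moving_mono[OF f] z w' marked(1) by (simp add: lt_def)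
    ultimately show ?thesis using marked by simp
  qed
qed

lemma decode_swap:
  assumes f: "f \<in> moving_mono_transfs" and p: "p = f 0" and w: "nonzero w" "p \<prec> w"
    and a: "\<not> f w \<preceq> p" and no_drop: "\<not> (\<exists>w'. nonzero w' \<and> p \<prec> w' \<and> f w' = p)"
  defines "h \<equiv> f(0 := 0, p := f w, w := p)"
  shows "h \<in> nonmono_fix0_transfs" "\<And>q. nonzero q \<Longrightarrow> h q \<noteq> 0"
    "decode h = f(p := if w \<preceq> f w then w else p)"
proof -
  have p_nz: "nonzero p" using moving_f0[OF f] p by simp
  have pw: "p \<noteq> w" using w(2) by (simp add: lt_def)
  have hv: "h 0 = 0" "h p = f w" "h w = p" "\<And>q. q \<noteq> 0 \<Longrightarrow> q \<noteq> p \<Longrightarrow> q \<noteq> w \<Longrightarrow> h q = f q"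
    using pw p_nz w by (auto simp: h_def)
  show nz: "h q \<noteq> 0" if "nonzero q" for q
    using hv moving_nonzero[OF f] p_nz w that by (cases "q = p"; cases "q = w") auto
  show "h \<in> nonmono_fix0_transfs"
  proof (rule nonmono_fix0_transfsI[where a = p and b = w])
    show "is_transf n h"
      unfolding h_def using moving_transf[OF f] moving_nonzero[OF f] p_nz w by (intro is_transf_upd) auto
  qed (use hv a p_nz w in \<open>auto simp: lt_def\<close>)
  let ?P = "\<lambda>(z, w'). nonzero z \<and> nonzero w' \<and> z \<prec> w' \<and> h w' = z \<and> \<not> h z \<preceq> z"
  have marked: "(SOME zw. ?P zw) = (p, w)"
  proof (rule some_equality)
    show "?P (p, w)" using p_nz w hv a by simp
    show "zw = (p, w)" if "?P zw" for zw
      using that swap_marked_pair_unique[OF f p w a no_drop h_def[THEN meta_eq_to_obj_eq]] by (cases zw) auto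
  qed
  have no_zero: "(\<exists>q. nonzero q \<and> h q = 0) = False" using nz by blast
  have "decode h = h(0 := p, p := if w \<preceq> h p then w else p, w := h p)"
    unfolding decode_def by (simp only: no_zero marked if_False Let_def prod.case)
  also have "\<dots> = f(p := if w \<preceq> f w then w else p)"
    using hv p pw p_nz by (auto simp: fun_eq_iff)
  finally show "decode h = f(p := if w \<preceq> f w then w else p)" .
qed

lemma decode_one_zero_fixed:
  assumes zero: "\<And>q. nonzero q \<Longrightarrow> h q = 0 \<longleftrightarrow> q = w" and w: "nonzero w"
    and p: "nonzero p" "p \<prec> w" "h p = p"
    and fixed_unique: "\<And>z. nonzero z \<Longrightarrow> z \<prec> w \<Longrightarrow> h z = z \<Longrightarrow> z = p"
  shows "decode h = h(0 := p, w := p)"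
proof -
  have has_zero: "(\<exists>q. nonzero q \<and> h q = 0) = True" using w zero[OF w] by blast
  have no_pair: "(\<exists>a b. nonzero a \<and> nonzero b \<and> h a = 0 \<and> h b = 0 \<and> a \<prec> b) = False"
    using zero by (auto simp: lt_def)
  have the_zero: "(SOME w'. nonzero w' \<and> h w' = 0) = w"
  proof (rule some_equality)
    show "nonzero w \<and> h w = 0" using w zero[OF w] by simp
    show "w' = w" if "nonzero w' \<and> h w' = 0" for w' using zero that by blast
  qed
  have has_fixed: "(\<exists>p'. nonzero p' \<and> p' \<prec> w \<and> h p' = p') = True" using p by blast
  have the_fixed: "(SOME p'. nonzero p' \<and> p' \<prec> w \<and> h p' = p') = p"
  proof (rule some_equality)
    show "nonzero p \<and> p \<prec> w \<and> h p = p" using p by simp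
    show "p' = p" if "nonzero p' \<and> p' \<prec> w \<and> h p' = p'" for p' using fixed_unique that by blast
  qed
  show ?thesis unfolding decode_def
    by (simp only: has_zero no_pair the_zero has_fixed the_fixed if_True if_False Let_def)
qed

lemma decode_one_zero_unfixed:
  assumes zero: "\<And>q. nonzero q \<Longrightarrow> h q = 0 \<longleftrightarrow> q = w" and w: "nonzero w"
    and p: "nonzero p" "p \<prec> w" "h p \<noteq> p"
    and below_unique: "\<And>z. nonzero z \<Longrightarrow> z \<prec> w \<Longrightarrow> z = p"
  shows "decode h = h(0 := p, w := w, p := p)"
proof -
  have has_zero: "(\<exists>q. nonzero q \<and> h q = 0) = True" using w zero[OF w] by blast
  have no_pair: "(\<exists>a b. nonzero a \<and> nonzero b \<and> h a = 0 \<and> h b = 0 \<and> a \<prec> b) = False"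
    using zero by (auto simp: lt_def)
  have the_zero: "(SOME w'. nonzero w' \<and> h w' = 0) = w"
  proof (rule some_equality)
    show "nonzero w \<and> h w = 0" using w zero[OF w] by simp
    show "w' = w" if "nonzero w' \<and> h w' = 0" for w' using zero that by blast
  qed
  have no_fixed: "(\<exists>p'. nonzero p' \<and> p' \<prec> w \<and> h p' = p') = False"
    using below_unique p(3) by blast
  have the_below: "(SOME p'. nonzero p' \<and> p' \<prec> w) = p"
  proof (rule some_equality)
    show "nonzero p \<and> p \<prec> w" using p by simp
    show "p' = p" if "nonzero p' \<and> p' \<prec> w" for p' using below_unique that by blast
  qed
  show ?thesis unfolding decode_def
    by (simp only: has_zero no_pair the_zero no_fixed the_below if_True if_False Let_def)
qed

lemma decode_two_zeros:
  assumes zero: "\<And>q. nonzero q \<Longrightarrow> h q = 0 \<longleftrightarrow> q = a \<or> q = b"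
    and ab: "nonzero a" "nonzero b" "a \<prec> b"
  shows "decode h = h(0 := a, b := b, a := a)"
proof -
  let ?P = "\<lambda>(a', b'). nonzero a' \<and> nonzero b' \<and> h a' = 0 \<and> h b' = 0 \<and> a' \<prec> b'"
  have the_pair: "(SOME ab. ?P ab) = (a, b)"
  proof (rule some_equality)
    show "?P (a, b)" using ab zero by simp
    show "ab' = (a, b)" if "?P ab'" for ab'
    proof (cases ab')
      case (Pair a' b')
      then have "a' = a \<or> a' = b" "b' = a \<or> b' = b" "a' \<prec> b'" using that zero by auto
      then show ?thesis using Pair ab not_lt_both[of a b] by (auto simp: lt_def)
    qed
  qed
  have has_zero: "(\<exists>q. nonzero q \<and> h q = 0) = True" using ab(1) zero[OF ab(1)] by blast
  have has_pair: "(\<exists>a b. nonzero a \<and> nonzero b \<and> h a = 0 \<and> h b = 0 \<and> a \<prec> b) = True"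
    using ab zero by blast
  show ?thesis unfolding decode_def
    by (simp only: has_zero has_pair the_pair if_True Let_def prod.case)
qed

lemma encode_f0_unfixed:
  assumes f: "f \<in> moving_mono_transfs" and unfixed: "f (f 0) \<noteq> f 0"
  shows "encode f \<in> nonmono_fix0_transfs \<and> decode (encode f) = f \<and>
    (\<forall>x y. nonzero x \<longrightarrow> nonzero y \<longrightarrow> x \<noteq> y \<longrightarrow> encode f \<noteq> spike x y)"
proof -
  define p where "p = f 0"
  define w where "w = f p"
  have p_nz: "nonzero p" using moving_f0[OF f] p_def by simp
  have w_nz: "nonzero w" using moving_nonzero[OF f] p_nz w_def by simp
  have pw: "p \<prec> w" using moving_f0_le[OF f, of p] p_nz unfixed by (auto simp: lt_def p_def w_def)
  have w_le: "w \<preceq> f w" using moving_mono[OF f] p_nz w_nz pw w_def by (simp add: lt_def)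
  have not_below: "\<not> v \<preceq> p" if "w \<preceq> v" "v < n" for v
    using that le_antisym_on[of p w] le_trans_on[of w v p] p_nz w_nz pw by (auto simp: lt_def)
  have no_drop: "\<not> (\<exists>w'. nonzero w' \<and> p \<prec> w' \<and> f w' = p)"
  proof
    assume "\<exists>w'. nonzero w' \<and> p \<prec> w' \<and> f w' = p"
    then obtain w' where "nonzero w'" "p \<prec> w'" "f w' = p" by blast
    then have "w \<preceq> p" using moving_mono[OF f, of p w'] p_nz w_def by (simp add: lt_def)
    then show False using not_below[of p] le_refl_on p_nz by simp
  qed
  have enc: "encode f = f(0 := 0, p := f w, w := p)"
    using unfixed unfolding encode_def p_def w_def Let_def by simp
  have "f w < n" using moving_nonzero[OF f] w_nz by simp
  note D = decode_swap[OF f p_def w_nz pw not_below[OF w_le \<open>f w < n\<close>] no_drop]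
  show ?thesis
  proof (intro conjI allI impI)
    show "encode f \<in> nonmono_fix0_transfs" using D(1) enc by simp
    show "decode (encode f) = f" using D(3) enc w_le by (simp add: w_def)
    show "encode f \<noteq> spike x y" if "nonzero y" for x y
      using D(2)[OF that] enc spike_zero by metis
  qed
qed

lemma encode_drop:
  assumes f: "f \<in> moving_mono_transfs" and fixed: "f (f 0) = f 0"
    and drop: "\<exists>w. nonzero w \<and> f 0 \<prec> w \<and> f w = f 0"
  shows "encode f \<in> nonmono_fix0_transfs \<and> decode (encode f) = f \<and>
    (\<forall>x y. nonzero x \<longrightarrow> nonzero y \<longrightarrow> x \<noteq> y \<longrightarrow> encode f \<noteq> spike x y)"
proof -
  define p where "p = f 0"
  define w where "w = (SOME w. nonzero w \<and> p \<prec> w \<and> f w = p)"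
  have p_nz: "nonzero p" and fp: "f p = p" using moving_f0[OF f] fixed p_def by simp_all
  have w: "nonzero w" "p \<prec> w" "f w = p"
    using someI_ex[OF drop[folded p_def]] unfolding w_def by simp_all
  have pw: "p \<noteq> w" using w(2) by (simp add: lt_def)
  define h where "h = f(0 := 0, w := 0)"
  have enc: "encode f = h"
    using fixed drop unfolding encode_def h_def w_def p_def Let_def by simp
  have hv: "h 0 = 0" "h w = 0" "h p = p" "\<And>q. q \<noteq> 0 \<Longrightarrow> q \<noteq> w \<Longrightarrow> h q = f q"
    using pw p_nz fp by (auto simp: h_def)
  have zero: "h q = 0 \<longleftrightarrow> q = w" if "nonzero q" for q
    using hv moving_nonzero[OF f] that by (cases "q = w") auto
  have fixed_below: "z = p" if "nonzero z" "z \<prec> w" "h z = z" for z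
  proof -
    have "f z = z" using that hv(4) by (auto simp: lt_def)
    then have "z \<preceq> p" using moving_mono[OF f, of z w] that w by (simp add: lt_def)
    moreover have "p \<preceq> z" using moving_f0_le[OF f, of z] \<open>f z = z\<close> that p_def by simp
    ultimately show ?thesis using le_antisym_on[of z p] that p_nz by simp
  qed
  have "decode h = h(0 := p, w := p)"
    using zero w(1) p_nz w(2) hv(3) fixed_below by (rule decode_one_zero_fixed)
  also have "\<dots> = f" using hv w p_def by (auto simp: fun_eq_iff)
  finally have dec: "decode (encode f) = f" using enc by simp
  show ?thesis
  proof (intro conjI allI impI dec)
    show "encode f \<in> nonmono_fix0_transfs" unfolding enc
    proof (rule nonmono_fix0_transfsI[where a = p and b = w])
      show "is_transf n h"
        unfolding h_def using moving_transf[OF f] w by (intro is_transf_upd) auto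
    qed (use hv p_nz w not_le_zero in \<open>auto simp: lt_def\<close>)
    show "encode f \<noteq> spike x y" if "nonzero x" "nonzero y" for x y
    proof
      assume spike: "encode f = spike x y"
      then have "y = w" using zero[OF that(2)] enc spike_zero by metis
      then have "x = p" using spike enc hv(3) spike_apply[OF p_nz pw] by simp
      have "f r = f 0" if "r < n" for r
      proof (cases "r = 0 \<or> r = w")
        case False
        then have "f r = spike x y r" using spike enc hv(4) by simp
        then show ?thesis using spike_apply[of r y x] False that \<open>y = w\<close> \<open>x = p\<close> p_def by simp
      qed (use w p_def in auto)
      then show False using moving_nonconst[OF f] by blast
    qed
  qed
qed

lemma encode_swap:
  assumes f: "f \<in> moving_mono_transfs" and fixed: "f (f 0) = f 0"
    and no_drop: "\<not> (\<exists>w. nonzero w \<and> f 0 \<prec> w \<and> f w = f 0)"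
    and swap: "\<exists>w. nonzero w \<and> f 0 \<prec> w \<and> \<not> w \<preceq> f w"
  shows "encode f \<in> nonmono_fix0_transfs \<and> decode (encode f) = f \<and>
    (\<forall>x y. nonzero x \<longrightarrow> nonzero y \<longrightarrow> x \<noteq> y \<longrightarrow> encode f \<noteq> spike x y)"
proof -
  define p where "p = f 0"
  define w where "w = (SOME w. nonzero w \<and> p \<prec> w \<and> \<not> w \<preceq> f w)"
  have p_nz: "nonzero p" and fp: "f p = p" using moving_f0[OF f] fixed p_def by simp_all
  have w: "nonzero w" "p \<prec> w" "\<not> w \<preceq> f w"
    using someI_ex[OF swap[folded p_def]] unfolding w_def by simp_all
  have "f w \<noteq> p"
  proof
    assume "f w = p"
    then have "\<exists>w. nonzero w \<and> p \<prec> w \<and> f w = p" using w(1,2) by blast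
    then show False using no_drop p_def by simp
  qed
  have above: "\<not> f w \<preceq> p"
  proof
    assume "f w \<preceq> p"
    moreover have "p \<preceq> f w" using moving_f0_le[OF f, of w] w(1) p_def by simp
    ultimately have "f w = p" using le_antisym_on[of "f w" p] moving_nonzero[OF f, of w] w(1) p_nz by simp
    then show False using \<open>f w \<noteq> p\<close> by simp
  qed
  have drop_false: "(\<exists>w. nonzero w \<and> p \<prec> w \<and> f w = p) = False" using no_drop p_def by simp
  have swap_true: "(\<exists>w. nonzero w \<and> p \<prec> w \<and> \<not> w \<preceq> f w) = True" using swap p_def by simp
  have enc: "encode f = f(0 := 0, p := f w, w := p)"
    unfolding encode_def Let_def p_def[symmetric] w_def
    by (simp only: fp drop_false swap_true if_False if_True simp_thms)
  note D = decode_swap[OF f p_def w(1,2) above no_drop[folded p_def]]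
  show ?thesis
  proof (intro conjI allI impI)
    show "encode f \<in> nonmono_fix0_transfs" using D(1) enc by simp
    show "decode (encode f) = f" using D(3) enc w(3) fp by (simp add: fun_upd_idem)
    show "encode f \<noteq> spike x y" if "nonzero y" for x y
      using D(2)[OF that] enc spike_zero by metis
  qed
qed

lemma maximal_above_f0_fixed:
  assumes f: "f \<in> moving_mono_transfs"
    and inflating: "\<not> (\<exists>w. nonzero w \<and> f 0 \<prec> w \<and> \<not> w \<preceq> f w)"
  defines "c \<equiv> SOME c. nonzero c \<and> f 0 \<prec> c \<and> maximal c"
  shows "nonzero c" "f 0 \<prec> c" "maximal c" "f c = c"
proof -
  obtain r where r: "r < n" "f r \<noteq> f 0" using moving_nonconst[OF f] by blast
  have "f 0 \<prec> f r" using moving_f0_le[OF f r(1)] r(2) by (simp add: lt_def)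
  obtain c' where c': "nonzero c'" "f r \<preceq> c'" "maximal c'"
    using exists_maximal_above moving_nonzero[OF f r(1)] by blast
  have "f 0 \<prec> c'"
    using \<open>f 0 \<prec> f r\<close> c' moving_f0[OF f] moving_nonzero[OF f r(1)] le_trans_on[of "f 0" "f r" c'] le_antisym_on[of "f 0" "f r"]
    by (auto simp: lt_def)
  then have "\<exists>c. nonzero c \<and> f 0 \<prec> c \<and> maximal c" using c' by blast
  then show c: "nonzero c" "f 0 \<prec> c" "maximal c" unfolding c_def by (rule someI2_ex; blast)+
  have "c \<preceq> f c" using inflating c by blast
  then show "f c = c" using c(1,3) moving_nonzero[OF f, of c] by (auto simp: lt_def)
qed

lemma encode_inflating_pair:
  assumes f: "f \<in> moving_mono_transfs" and fixed: "f (f 0) = f 0"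
    and no_drop: "\<not> (\<exists>w. nonzero w \<and> f 0 \<prec> w \<and> f w = f 0)"
    and inflating: "\<not> (\<exists>w. nonzero w \<and> f 0 \<prec> w \<and> \<not> w \<preceq> f w)"
  defines "c \<equiv> SOME c. nonzero c \<and> f 0 \<prec> c \<and> maximal c"
  assumes other: "\<exists>z. nonzero z \<and> z \<prec> c \<and> z \<noteq> f 0"
  shows "encode f \<in> nonmono_fix0_transfs \<and> decode (encode f) = f \<and>
    (\<forall>x y. nonzero x \<longrightarrow> nonzero y \<longrightarrow> x \<noteq> y \<longrightarrow> encode f \<noteq> spike x y)"
proof -
  note C = maximal_above_f0_fixed[OF f inflating, folded c_def]
  define p where "p = f 0"
  have p_nz: "nonzero p" and fp: "f p = p" using moving_f0[OF f] fixed p_def by simp_all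
  have pc: "p \<prec> c" "p \<noteq> c" using C(2) p_def by (auto simp: lt_def)
  define h where "h = f(0 := 0, c := 0, p := 0)"
  have drop_false: "(\<exists>w. nonzero w \<and> p \<prec> w \<and> f w = p) = False" using no_drop p_def by simp
  have swap_false: "(\<exists>w. nonzero w \<and> p \<prec> w \<and> \<not> w \<preceq> f w) = False" using inflating p_def by simp
  have other_true: "(\<exists>z. nonzero z \<and> z \<prec> c \<and> z \<noteq> p) = True" using other p_def by simp
  have enc: "encode f = h"
    unfolding encode_def Let_def p_def[symmetric] c_def[folded p_def, symmetric] h_def
    by (simp only: fp drop_false swap_false other_true if_False if_True simp_thms)
  have hv: "h 0 = 0" "h c = 0" "h p = 0" "\<And>q. q \<noteq> 0 \<Longrightarrow> q \<noteq> c \<Longrightarrow> q \<noteq> p \<Longrightarrow> h q = f q"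
    by (auto simp: h_def)
  have zero: "h q = 0 \<longleftrightarrow> q = p \<or> q = c" if "nonzero q" for q
    using hv moving_nonzero[OF f, of q] that by (cases "q = c \<or> q = p") auto
  obtain z where z: "nonzero z" "z \<prec> c" "z \<noteq> p" using other p_def by blast
  have "decode h = h(0 := p, c := c, p := p)"
    using zero p_nz C(1) pc(1) by (rule decode_two_zeros)
  also have "\<dots> = f" using hv fp C(4) p_def by (auto simp: fun_eq_iff)
  finally have dec: "decode (encode f) = f" using enc by simp
  show ?thesis
  proof (intro conjI allI impI dec)
    show "encode f \<in> nonmono_fix0_transfs" unfolding enc
    proof (rule nonmono_fix0_transfsI[where a = z and b = c])
      show "is_transf n h"
        unfolding h_def using moving_transf[OF f] p_nz C(1) by (intro is_transf_upd) auto
      have "h z = f z" using hv(4) z by (simp add: lt_def)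
      then show "\<not> h z \<preceq> h c" using hv(2) not_le_zero moving_nonzero[OF f, of z] z by simp
    qed (use hv z C(1) in \<open>auto simp: lt_def\<close>)
    show "encode f \<noteq> spike x y" if "nonzero x" "nonzero y" "x \<noteq> y" for x y
    proof
      assume spike: "encode f = spike x y"
      then have "c = y" using hv(2) enc spike_eq_0_iff[OF C(1)] that(1) by simp
      moreover have "p = y" using spike hv(3) enc spike_eq_0_iff[OF p_nz] that(1) by simp
      ultimately show False using pc(2) by simp
    qed
  qed
qed

lemma encode_inflating_single:
  assumes f: "f \<in> moving_mono_transfs" and fixed: "f (f 0) = f 0"
    and no_drop: "\<not> (\<exists>w. nonzero w \<and> f 0 \<prec> w \<and> f w = f 0)"
    and inflating: "\<not> (\<exists>w. nonzero w \<and> f 0 \<prec> w \<and> \<not> w \<preceq> f w)"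
  defines "c \<equiv> SOME c. nonzero c \<and> f 0 \<prec> c \<and> maximal c"
  assumes no_other: "\<not> (\<exists>z. nonzero z \<and> z \<prec> c \<and> z \<noteq> f 0)"
  shows "encode f \<in> nonmono_fix0_transfs \<and> decode (encode f) = f \<and>
    (\<forall>x y. nonzero x \<longrightarrow> nonzero y \<longrightarrow> x \<noteq> y \<longrightarrow> encode f \<noteq> spike x y)"
proof -
  note C = maximal_above_f0_fixed[OF f inflating, folded c_def]
  define p where "p = f 0"
  have p_nz: "nonzero p" and fp: "f p = p" using moving_f0[OF f] fixed p_def by simp_all
  have pc: "p \<prec> c" "p \<noteq> c" using C(2) p_def by (auto simp: lt_def)
  have below: "z = p" if "nonzero z" "z \<prec> c" for z using no_other that p_def by blast
  define h where "h = f(0 := 0, c := 0, p := c)"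
  have drop_false: "(\<exists>w. nonzero w \<and> p \<prec> w \<and> f w = p) = False" using no_drop p_def by simp
  have swap_false: "(\<exists>w. nonzero w \<and> p \<prec> w \<and> \<not> w \<preceq> f w) = False" using inflating p_def by simp
  have other_false: "(\<exists>z. nonzero z \<and> z \<prec> c \<and> z \<noteq> p) = False" using no_other p_def by simp
  have enc: "encode f = h"
    unfolding encode_def Let_def p_def[symmetric] c_def[folded p_def, symmetric] h_def
    by (simp only: fp drop_false swap_false other_false if_False if_True simp_thms)
  have hv: "h 0 = 0" "h c = 0" "h p = c" "\<And>q. q \<noteq> 0 \<Longrightarrow> q \<noteq> c \<Longrightarrow> q \<noteq> p \<Longrightarrow> h q = f q"
    using pc(2) p_nz by (auto simp: h_def)
  have zero: "h q = 0 \<longleftrightarrow> q = c" if "nonzero q" for q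
    using hv moving_nonzero[OF f, of q] C(1) that by (cases "q = c"; cases "q = p") auto
  have "h p \<noteq> p" using hv(3) pc(2) by simp
  then have "decode h = h(0 := p, c := c, p := p)"
    using zero C(1) p_nz pc(1) below by (intro decode_one_zero_unfixed)
  also have "\<dots> = f" using hv fp C(4) p_def by (auto simp: fun_eq_iff)
  finally have dec: "decode (encode f) = f" using enc by simp
  show ?thesis
  proof (intro conjI allI impI dec)
    show "encode f \<in> nonmono_fix0_transfs" unfolding enc
    proof (rule nonmono_fix0_transfsI[where a = p and b = c])
      show "is_transf n h"
        unfolding h_def using moving_transf[OF f] p_nz C(1) by (intro is_transf_upd) auto
    qed (use hv p_nz pc C(1) not_le_zero in \<open>auto simp: lt_def\<close>)
    show "encode f \<noteq> spike x y" if "nonzero x" "nonzero y" "x \<noteq> y" for x y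
    proof
      assume spike: "encode f = spike x y"
      then have "c = y" using hv(2) enc spike_eq_0_iff[OF C(1)] that(1) by simp
      moreover have "spike x y p = x" using spike_apply[OF p_nz] pc(2) \<open>c = y\<close> by simp
      ultimately show False using spike enc hv(3) that(3) by simp
    qed
  qed
qed

lemma encode_correct:
  assumes f: "f \<in> moving_mono_transfs"
  shows "encode f \<in> nonmono_fix0_transfs \<and> decode (encode f) = f \<and>
    (\<forall>x y. nonzero x \<longrightarrow> nonzero y \<longrightarrow> x \<noteq> y \<longrightarrow> encode f \<noteq> spike x y)"
proof -
  define c where "c = (SOME c. nonzero c \<and> f 0 \<prec> c \<and> maximal c)"
  consider "f (f 0) \<noteq> f 0"
    | "f (f 0) = f 0" "\<exists>w. nonzero w \<and> f 0 \<prec> w \<and> f w = f 0"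
    | "f (f 0) = f 0" "\<not> (\<exists>w. nonzero w \<and> f 0 \<prec> w \<and> f w = f 0)"
        "\<exists>w. nonzero w \<and> f 0 \<prec> w \<and> \<not> w \<preceq> f w"
    | "f (f 0) = f 0" "\<not> (\<exists>w. nonzero w \<and> f 0 \<prec> w \<and> f w = f 0)"
        "\<not> (\<exists>w. nonzero w \<and> f 0 \<prec> w \<and> \<not> w \<preceq> f w)" "\<exists>z. nonzero z \<and> z \<prec> c \<and> z \<noteq> f 0"
    | "f (f 0) = f 0" "\<not> (\<exists>w. nonzero w \<and> f 0 \<prec> w \<and> f w = f 0)"
        "\<not> (\<exists>w. nonzero w \<and> f 0 \<prec> w \<and> \<not> w \<preceq> f w)" "\<not> (\<exists>z. nonzero z \<and> z \<prec> c \<and> z \<noteq> f 0)"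
    by argo
  then show ?thesis
  proof cases
    case 1 then show ?thesis by (rule encode_f0_unfixed[OF f])
  next
    case 2 then show ?thesis by (rule encode_drop[OF f])
  next
    case 3 then show ?thesis by (rule encode_swap[OF f])
  next
    case 4 then show ?thesis using encode_inflating_pair[OF f, folded c_def] by blast
  next
    case 5 then show ?thesis using encode_inflating_single[OF f, folded c_def] by blast
  qed
qed

lemma inj_on_encode: "inj_on encode moving_mono_transfs"
  by (rule inj_on_inverseI[where g = decode]) (use encode_correct in blast)

lemma finite_mono_transfs: "finite mono_transfs"
  using finite_transfs[of n] by (auto simp: monotone_transfs_def intro: finite_subset)

lemma const_mono_transf:
  assumes f: "f \<in> mono_transfs" and f0: "f 0 \<noteq> 0" and const: "\<forall>r<n. f r = f 0"
  shows "f \<in> const_transf n ` {1..<n}"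
proof -
  have transf: "is_transf n f" using f by (simp add: monotone_transfs_def)
  have "0 < n"
  proof (rule ccontr)
    assume "\<not> 0 < n"
    then show False using transf f0 by (simp add: is_transf_def)
  qed
  define c where "c = f 0"
  have c: "c \<in> {1..<n}" using f0 \<open>0 < n\<close> transf by (simp add: c_def is_transf_def)
  have "f = const_transf n c"
  proof (rule const_transf_eqI[OF transf])
    show "c < n" using c by simp
    show "f r = c" if "r < n" for r using const that c_def by metis
  qed
  then show ?thesis using c by (rule image_eqI)
qed

lemma card_mono_transfs_less:
  assumes x: "nonzero x" and y: "nonzero y" and xy: "x \<prec> y"
  shows "card mono_transfs < n ^ (n - 1) + n - 1"
proof -
  let ?M0 = "fix0_transfs n \<inter> mono_transfs" and ?C = "const_transf n ` {1..<n}"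
  have fin0: "finite (fix0_transfs n)"
    using finite_transfs[of n] by (auto simp: fix0_transfs_def intro: finite_subset)
  have finN: "finite nonmono_fix0_transfs"
    using fin0 by (simp add: nonmono_fix0_transfs_def)
  have split0: "card (fix0_transfs n) = card ?M0 + card nonmono_fix0_transfs"
    unfolding nonmono_fix0_transfs_def using fin0 by (rule card_Int_Diff)
  have spike: "spike x y \<in> nonmono_fix0_transfs"
    using spike_in_nonmono_fix0_transfs[OF x y xy] .
  have "encode ` moving_mono_transfs \<subseteq> nonmono_fix0_transfs - {spike x y}"
    using encode_correct x y xy by (auto simp: lt_def)
  then have card_moving: "card moving_mono_transfs \<le> card nonmono_fix0_transfs - 1"
    using card_mono[OF _ \<open>encode ` _ \<subseteq> _\<close>] card_image[OF inj_on_encode] finN spike by simp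
  have card_nonmono: "card nonmono_fix0_transfs \<ge> 1"
    using spike finN by (metis One_nat_def Suc_leI card_gt_0_iff empty_iff)
  have card_const: "card ?C \<le> n - 1" using card_image_le[of "{1..<n}" "const_transf n"] by simp
  have cover: "mono_transfs \<subseteq> ?M0 \<union> moving_mono_transfs \<union> ?C"
  proof
    fix f assume f: "f \<in> mono_transfs"
    show "f \<in> ?M0 \<union> moving_mono_transfs \<union> ?C"
    proof (cases "f 0 = 0")
      case True then show ?thesis using f by (simp add: monotone_transfs_def fix0_transfs_def)
    next
      case False
      then show ?thesis using f const_mono_transf[OF f] by (auto simp: moving_mono_transfs_def)
    qed
  qed
  have "finite (?M0 \<union> moving_mono_transfs \<union> ?C)"
    using fin0 finite_mono_transfs by (auto simp: moving_mono_transfs_def intro: finite_subset)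
  then have "card mono_transfs \<le> card (?M0 \<union> moving_mono_transfs \<union> ?C)"
    using cover by (rule card_mono)
  also have "\<dots> \<le> card (?M0 \<union> moving_mono_transfs) + card ?C" by (rule card_Un_le)
  also have "\<dots> \<le> card ?M0 + card moving_mono_transfs + card ?C"
    using card_Un_le[of ?M0 moving_mono_transfs] by simp
  finally show ?thesis
    using split0 card_moving card_nonmono card_const card_fix0_transfs_le[of n] x by arith
qed

lemma mono_transfs_subset_fix0_or_const:
  assumes antichain: "\<not> (\<exists>x y. nonzero x \<and> nonzero y \<and> x \<prec> y)"
  shows "mono_transfs \<subseteq> fix0_or_const n"
proof
  fix f assume f: "f \<in> mono_transfs"
  show "f \<in> fix0_or_const n"
  proof (cases "f 0 = 0")
    case True then show ?thesis using f by (simp add: monotone_transfs_def fix0_or_const_def fix0_transfs_def)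
  next
    case False
    have "\<forall>r<n. f r = f 0"
    proof (intro allI impI, rule ccontr)
      fix r assume "r < n"
      assume "f r \<noteq> f 0"
      then have moving: "f \<in> moving_mono_transfs"
        using f False \<open>r < n\<close> by (auto simp: moving_mono_transfs_def)
      have "f 0 \<prec> f r"
        using moving_f0_le[OF moving \<open>r < n\<close>] \<open>f r \<noteq> f 0\<close> by (simp add: lt_def)
      moreover have "nonzero (f 0)" "nonzero (f r)"
        using moving_f0[OF moving] moving_nonzero[OF moving \<open>r < n\<close>] by simp_all
      ultimately show False using antichain by blast
    qed
    then have "f \<in> const_transf n ` {1..<n}" by (rule const_mono_transf[OF f False])
    then show ?thesis unfolding fix0_or_const_def by blast
  qed
qed

end

section \<open>Minimal DFAs of left ideals\<close>

definition state_quotient :: "'a set \<Rightarrow> (nat \<Rightarrow> 'a \<Rightarrow> nat) \<Rightarrow> nat set \<Rightarrow> nat \<Rightarrow> 'a list set" where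
  "state_quotient \<Sigma> \<delta> F q = {w \<in> lists \<Sigma>. foldl \<delta> q w \<in> F}"

lemma state_quotient_foldl:
  "w \<in> lists \<Sigma> \<Longrightarrow> v \<in> state_quotient \<Sigma> \<delta> F (foldl \<delta> p w) \<longleftrightarrow> w @ v \<in> state_quotient \<Sigma> \<delta> F p"
  by (auto simp: state_quotient_def)

lemma left_ideal_quotient_order:
  assumes minimal: "minimal_dfa n \<Sigma> \<delta> F" and ideal: "left_ideal \<Sigma> (dfa_lang \<Sigma> \<delta> F)"
  shows "bottomed_order n (\<lambda>p q. state_quotient \<Sigma> \<delta> F p \<subseteq> state_quotient \<Sigma> \<delta> F q)"
proof
  show "state_quotient \<Sigma> \<delta> F q \<subseteq> state_quotient \<Sigma> \<delta> F q" for q by simp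
  show "state_quotient \<Sigma> \<delta> F p \<subseteq> state_quotient \<Sigma> \<delta> F r"
    if "state_quotient \<Sigma> \<delta> F p \<subseteq> state_quotient \<Sigma> \<delta> F q"
      "state_quotient \<Sigma> \<delta> F q \<subseteq> state_quotient \<Sigma> \<delta> F r" for p q r
    using that by blast
  show "p = q" if pq: "p < n" "q < n" "state_quotient \<Sigma> \<delta> F p \<subseteq> state_quotient \<Sigma> \<delta> F q"
    "state_quotient \<Sigma> \<delta> F q \<subseteq> state_quotient \<Sigma> \<delta> F p" for p q
  proof (rule ccontr)
    assume "p \<noteq> q"
    then have "\<exists>w\<in>lists \<Sigma>. (foldl \<delta> p w \<in> F) \<noteq> (foldl \<delta> q w \<in> F)"
      using minimal pq(1,2) by (simp add: minimal_dfa_def)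
    then obtain w where "w \<in> lists \<Sigma>" "(foldl \<delta> p w \<in> F) \<noteq> (foldl \<delta> q w \<in> F)" by blast
    then show False using pq(3,4) by (auto simp: state_quotient_def)
  qed
  show "state_quotient \<Sigma> \<delta> F 0 \<subseteq> state_quotient \<Sigma> \<delta> F q" if q: "q < n" for q
  proof
    fix v assume v: "v \<in> state_quotient \<Sigma> \<delta> F 0"
    obtain u where u: "u \<in> lists \<Sigma>" "foldl \<delta> 0 u = q"
      using minimal q by (auto simp: minimal_dfa_def)
    have "dfa_lang \<Sigma> \<delta> F = {u @ v | u v. u \<in> lists \<Sigma> \<and> v \<in> dfa_lang \<Sigma> \<delta> F}"
      using ideal by (simp add: left_ideal_def)
    moreover have "v \<in> dfa_lang \<Sigma> \<delta> F" using v by (simp add: state_quotient_def dfa_lang_def)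
    ultimately have "u @ v \<in> dfa_lang \<Sigma> \<delta> F" using u(1) by blast
    then show "v \<in> state_quotient \<Sigma> \<delta> F q"
      using state_quotient_foldl[OF u(1)] u(2) by (simp add: state_quotient_def dfa_lang_def)
  qed
qed

lemma trans_semigroup_subset_mono_transfs:
  assumes "is_dfa n \<Sigma> \<delta> F"
  shows "trans_semigroup n \<Sigma> \<delta>
    \<subseteq> monotone_transfs n (\<lambda>p q. state_quotient \<Sigma> \<delta> F p \<subseteq> state_quotient \<Sigma> \<delta> F q)"
proof
  fix t assume "t \<in> trans_semigroup n \<Sigma> \<delta>"
  then obtain w where t: "t = word_trans n \<delta> w" and w: "w \<in> lists \<Sigma>"
    by (auto simp: trans_semigroup_def)
  have closed: "\<forall>q<n. \<forall>x\<in>\<Sigma>. \<delta> q x < n" using assms by (simp add: is_dfa_def)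
  have "state_quotient \<Sigma> \<delta> F (t p) \<subseteq> state_quotient \<Sigma> \<delta> F (t q)"
    if "p < n" "q < n" "state_quotient \<Sigma> \<delta> F p \<subseteq> state_quotient \<Sigma> \<delta> F q" for p q
    using that state_quotient_foldl[OF w] by (auto simp: t word_trans_def)
  then show "t \<in> monotone_transfs n (\<lambda>p q. state_quotient \<Sigma> \<delta> F p \<subseteq> state_quotient \<Sigma> \<delta> F q)"
    using is_transf_word_trans[OF closed w] unfolding monotone_transfs_def t by blast
qed

theorem theorem3:
  fixes n :: nat and \<Sigma> :: "'a set" and \<delta> :: "nat \<Rightarrow> 'a \<Rightarrow> nat" and F :: "nat set"
  assumes "n \<ge> 3"
    and "minimal_dfa n \<Sigma> \<delta> F"
    and "left_ideal \<Sigma> (dfa_lang \<Sigma> \<delta> F)"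
    and "card (trans_semigroup n \<Sigma> \<delta>) = n ^ (n - 1) + n - 1"
  shows "trans_semigroup n \<Sigma> \<delta> = S n"
proof -
  interpret bottomed_order n "\<lambda>p q. state_quotient \<Sigma> \<delta> F p \<subseteq> state_quotient \<Sigma> \<delta> F q"
    using assms(2,3) by (rule left_ideal_quotient_order)
  let ?T = "trans_semigroup n \<Sigma> \<delta>"
  have "is_dfa n \<Sigma> \<delta> F" using assms(2) by (simp add: minimal_dfa_def)
  then have T_mono: "?T \<subseteq> mono_transfs" by (rule trans_semigroup_subset_mono_transfs)
  have antichain: "\<not> (\<exists>x y. nonzero x \<and> nonzero y \<and> lt x y)"
  proof
    assume "\<exists>x y. nonzero x \<and> nonzero y \<and> lt x y"
    then have "card mono_transfs < n ^ (n - 1) + n - 1" using card_mono_transfs_less by blast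
    moreover have "card ?T \<le> card mono_transfs" using T_mono finite_mono_transfs by (rule card_mono[rotated])
    ultimately show False using assms(4) by simp
  qed
  have "?T \<subseteq> fix0_or_const n" using T_mono mono_transfs_subset_fix0_or_const[OF antichain] by blast
  moreover have "card (fix0_or_const n) \<le> card ?T" using card_fix0_or_const_le[of n] assms(1,4) by simp
  ultimately have "?T = fix0_or_const n" using finite_fix0_or_const card_seteq by blast
  then show ?thesis using S_eq_fix0_or_const assms(1) by simp
qed

end
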